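(* Let $m,n\in\mathbb{N}$. Then: (1) the complete bipartite graph $K_{1,n}$ is an $\mathcal{N}$ position for Grim; (2) if $m,n>1$, then $K_{m,n}$ is an $\mathcal{N}$ position for Grim if and only if $m+n$ is odd.
   Context: Grim is a two-player game on a finite simple undirected graph. Any isolated vertices of the starting graph are deleted before play begins. Players alternate moves; a move consists of selecting a vertex of the current graph and deleting it together with all its incident edges, after which every vertex that has become isolated is also deleted. The player who makes the last legal move wins (a player facing the empty graph has no move and loses). A graph is an $\mathcal{N}$ position if the player about to move has a winning strategy, and a $\mathcal{P}$ position otherwise. *)

theory Defs
  imports Main
begin

type_synonym 'a graph = "'a set \<times> 'a set set"

definition simple_graph :: "'a graph \<Rightarrow> bool" where
  "simple_graph G \<longleftrightarrow> finite (fst G) \<and>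
     (\<forall>e\<in>snd G. \<exists>u v. u \<in> fst G \<and> v \<in> fst G \<and> u \<noteq> v \<and> e = {u, v})"

definition del_isolated :: "'a graph \<Rightarrow> 'a graph" where
  "del_isolated G = ({v \<in> fst G. \<exists>e\<in>snd G. v \<in> e}, snd G)"

definition grim_move :: "'a graph \<Rightarrow> 'a \<Rightarrow> 'a graph" where
  "grim_move G v = del_isolated (fst G - {v}, {e \<in> snd G. v \<notin> e})"

text \<open>N positions (next player wins) and P positions (previous player wins),
  defined by the usual mutual recursion; a position with no vertex is P.\<close>
inductive grim_N :: "'a graph \<Rightarrow> bool" and grim_P :: "'a graph \<Rightarrow> bool" where
  N_intro: "v \<in> fst G \<Longrightarrow> grim_P (grim_move G v) \<Longrightarrow> grim_N G"
| P_intro: "(\<And>v. v \<in> fst G \<Longrightarrow> grim_N (grim_move G v)) \<Longrightarrow> grim_P G"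

definition grim_N_position :: "'a graph \<Rightarrow> bool" where
  "grim_N_position G \<longleftrightarrow> grim_N (del_isolated G)"

definition K_bip :: "nat \<Rightarrow> nat \<Rightarrow> (nat + nat) graph" where
  "K_bip m n = (Inl ` {..<m} \<union> Inr ` {..<n},
                {{Inl i, Inr j} | i j. i < m \<and> j < n})"

end

theory Submission
  imports Defs
begin

text \<open>Deleting a vertex of K_{A,B} leaves K_{A-{a},B}, or the empty graph once a part is
  exhausted. A star K_{1,n} is therefore cleared in one move by taking its centre. If both parts
  have size at least two, every move either leaves a star or lowers |A|+|B| by one with both parts
  still of size at least two. By induction on |A|+|B|, the positions with |A|+|B| even are P:
  from them every move reaches a star or an odd position, while from an odd position one reaches
  an even one by shrinking a part of size at least three, which exists by parity.\<close>

lemma grim_P_empty: "grim_P ({}, {})"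
  by (rule P_intro) simp

lemma grim_N_P_disjoint:
  fixes G H :: "'a graph"
  shows "grim_N G \<Longrightarrow> \<not> grim_P G" and "grim_P H \<Longrightarrow> \<not> grim_N H"
proof (induct G and H rule: grim_N_grim_P.inducts)
  case (N_intro v G)
  then show ?case by (blast elim: grim_P.cases)
next
  case (P_intro G)
  then show ?case by (blast elim: grim_N.cases)
qed

lemma Diff_singleton_nonempty_if_card_ge_2:
  assumes "2 \<le> card A"
  shows "A - {a} \<noteq> {}"
proof
  assume "A - {a} = {}"
  then have "card A \<le> card {a}" using assms by (intro card_mono) auto
  with assms show False by simp
qed

definition complete_bipartite :: "'a set \<Rightarrow> 'b set \<Rightarrow> ('a + 'b) graph" where
  "complete_bipartite A B =
     (Inl ` A \<union> Inr ` B, {{Inl i, Inr j} | i j. i \<in> A \<and> j \<in> B})"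

lemma fst_complete_bipartite: "fst (complete_bipartite A B) = Inl ` A \<union> Inr ` B"
  by (simp add: complete_bipartite_def)

lemma K_bip_eq_complete_bipartite: "K_bip m n = complete_bipartite {..<m} {..<n}"
  by (simp add: K_bip_def complete_bipartite_def)

lemma del_isolated_complete_bipartite:
  "A \<noteq> {} \<Longrightarrow> B \<noteq> {} \<Longrightarrow> del_isolated (complete_bipartite A B) = complete_bipartite A B"
  unfolding del_isolated_def complete_bipartite_def by auto

lemma del_isolated_complete_bipartite_empty:
  "del_isolated (complete_bipartite {} B) = ({}, {})"
  "del_isolated (complete_bipartite A {}) = ({}, {})"
  unfolding del_isolated_def complete_bipartite_def by auto

lemma grim_move_complete_bipartite_Inl:
  "grim_move (complete_bipartite A B) (Inl a) = del_isolated (complete_bipartite (A - {a}) B)"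
proof -
  have "(fst (complete_bipartite A B) - {Inl a}, {e \<in> snd (complete_bipartite A B). Inl a \<notin> e})
        = complete_bipartite (A - {a}) B"
    unfolding complete_bipartite_def by auto
  then show ?thesis unfolding grim_move_def by simp
qed

lemma grim_move_complete_bipartite_Inr:
  "grim_move (complete_bipartite A B) (Inr b) = del_isolated (complete_bipartite A (B - {b}))"
proof -
  have "(fst (complete_bipartite A B) - {Inr b}, {e \<in> snd (complete_bipartite A B). Inr b \<notin> e})
        = complete_bipartite A (B - {b})"
    unfolding complete_bipartite_def by auto
  then show ?thesis unfolding grim_move_def by simp
qed

lemma grim_N_star_left: "grim_N (complete_bipartite {a} B)"
proof (rule N_intro)
  show "Inl a \<in> fst (complete_bipartite {a} B)" by (simp add: fst_complete_bipartite)
  show "grim_P (grim_move (complete_bipartite {a} B) (Inl a))"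
    by (simp add: grim_move_complete_bipartite_Inl del_isolated_complete_bipartite_empty
        grim_P_empty)
qed

lemma grim_N_star_right: "grim_N (complete_bipartite A {b})"
proof (rule N_intro)
  show "Inr b \<in> fst (complete_bipartite A {b})" by (simp add: fst_complete_bipartite)
  show "grim_P (grim_move (complete_bipartite A {b}) (Inr b))"
    by (simp add: grim_move_complete_bipartite_Inr del_isolated_complete_bipartite_empty
        grim_P_empty)
qed

lemma grim_move_complete_bipartite_Inl_nonempty:
  "A - {a} \<noteq> {} \<Longrightarrow> B \<noteq> {} \<Longrightarrow>
    grim_move (complete_bipartite A B) (Inl a) = complete_bipartite (A - {a}) B"
  by (simp add: grim_move_complete_bipartite_Inl del_isolated_complete_bipartite)

lemma grim_move_complete_bipartite_Inr_nonempty: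
  "A \<noteq> {} \<Longrightarrow> B - {b} \<noteq> {} \<Longrightarrow>
    grim_move (complete_bipartite A B) (Inr b) = complete_bipartite A (B - {b})"
  by (simp add: grim_move_complete_bipartite_Inr del_isolated_complete_bipartite)

lemma grim_N_complete_bipartite_odd_step:
  fixes A :: "'a set" and B :: "'b set"
  assumes fin: "finite A" "finite B" and card: "2 \<le> card A" "2 \<le> card B"
    and odd: "odd (card A + card B)"
    and IH: "\<And>(A' :: 'a set) (B' :: 'b set).
               finite A' \<Longrightarrow> finite B' \<Longrightarrow> 2 \<le> card A' \<Longrightarrow> 2 \<le> card B' \<Longrightarrow>
               card A' + card B' < card A + card B \<Longrightarrow> even (card A' + card B') \<Longrightarrow>
               grim_P (complete_bipartite A' B')"
  shows "grim_N (complete_bipartite A B)"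
proof -
  have ne: "A \<noteq> {}" "B \<noteq> {}" using card by auto
  show ?thesis
  proof (cases "card A = 2")
    case True
    then have "3 \<le> card B" using odd card(2) by presburger
    obtain b where b: "b \<in> B" using ne by blast
    have "2 \<le> card (B - {b})" "card A + card (B - {b}) < card A + card B"
      "even (card A + card (B - {b}))" using b fin odd \<open>3 \<le> card B\<close> by auto
    then have "grim_P (complete_bipartite A (B - {b}))"
      using IH[OF fin(1) finite_Diff[OF fin(2)] card(1)] by blast
    moreover have "B - {b} \<noteq> {}" using card(2) by (rule Diff_singleton_nonempty_if_card_ge_2)
    ultimately show ?thesis using b ne
      by (intro N_intro[of "Inr b"])
        (simp_all add: fst_complete_bipartite grim_move_complete_bipartite_Inr_nonempty)
  next
    case False
    obtain a where a: "a \<in> A" using ne by blast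
    have "2 \<le> card (A - {a})" "card (A - {a}) + card B < card A + card B"
      "even (card (A - {a}) + card B)" using a fin odd card False by auto
    then have "grim_P (complete_bipartite (A - {a}) B)"
      using IH[OF finite_Diff[OF fin(1)] fin(2) _ card(2)] by blast
    moreover have "A - {a} \<noteq> {}" using card(1) by (rule Diff_singleton_nonempty_if_card_ge_2)
    ultimately show ?thesis using a ne
      by (intro N_intro[of "Inl a"])
        (simp_all add: fst_complete_bipartite grim_move_complete_bipartite_Inl_nonempty)
  qed
qed

lemma grim_P_complete_bipartite_even_step:
  fixes A :: "'a set" and B :: "'b set"
  assumes fin: "finite A" "finite B" and card: "2 \<le> card A" "2 \<le> card B"
    and even: "even (card A + card B)"
    and IH: "\<And>(A' :: 'a set) (B' :: 'b set).
               finite A' \<Longrightarrow> finite B' \<Longrightarrow> 2 \<le> card A' \<Longrightarrow> 2 \<le> card B' \<Longrightarrow>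
               card A' + card B' < card A + card B \<Longrightarrow> odd (card A' + card B') \<Longrightarrow>
               grim_N (complete_bipartite A' B')"
  shows "grim_P (complete_bipartite A B)"
proof (rule P_intro)
  have ne: "A \<noteq> {}" "B \<noteq> {}" using card by auto
  fix v assume "v \<in> fst (complete_bipartite A B)"
  then consider (Inl) a where "v = Inl a" "a \<in> A" | (Inr) b where "v = Inr b" "b \<in> B"
    by (auto simp: fst_complete_bipartite)
  then show "grim_N (grim_move (complete_bipartite A B) v)"
  proof cases
    case Inl
    have card_A: "card (A - {a}) = card A - 1" using Inl fin by simp
    have "A - {a} \<noteq> {}" using card(1) by (rule Diff_singleton_nonempty_if_card_ge_2)
    then have move: "grim_move (complete_bipartite A B) v = complete_bipartite (A - {a}) B"
      using Inl ne by (simp add: grim_move_complete_bipartite_Inl_nonempty)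
    show ?thesis
    proof (cases "card A = 2")
      case True
      then obtain a' where "A - {a} = {a'}" using card_A by (auto simp: card_Suc_eq)
      then show ?thesis using move grim_N_star_left by simp
    next
      case False
      then have "2 \<le> card (A - {a})" "card (A - {a}) + card B < card A + card B"
        "odd (card (A - {a}) + card B)" using card_A card even by auto
      then show ?thesis using move IH[OF finite_Diff[OF fin(1)] fin(2) _ card(2)] by simp
    qed
  next
    case Inr
    have card_B: "card (B - {b}) = card B - 1" using Inr fin by simp
    have "B - {b} \<noteq> {}" using card(2) by (rule Diff_singleton_nonempty_if_card_ge_2)
    then have move: "grim_move (complete_bipartite A B) v = complete_bipartite A (B - {b})"
      using Inr ne by (simp add: grim_move_complete_bipartite_Inr_nonempty)
    show ?thesis
    proof (cases "card B = 2")
      case True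
      then obtain b' where "B - {b} = {b'}" using card_B by (auto simp: card_Suc_eq)
      then show ?thesis using move grim_N_star_right by simp
    next
      case False
      then have "2 \<le> card (B - {b})" "card A + card (B - {b}) < card A + card B"
        "odd (card A + card (B - {b}))" using card_B card even by auto
      then show ?thesis using move IH[OF fin(1) finite_Diff[OF fin(2)] card(1)] by simp
    qed
  qed
qed

lemma grim_complete_bipartite_parity:
  fixes A :: "'a set" and B :: "'b set"
  assumes "finite A" "finite B" "2 \<le> card A" "2 \<le> card B"
  shows "(odd (card A + card B) \<longrightarrow> grim_N (complete_bipartite A B)) \<and>
         (even (card A + card B) \<longrightarrow> grim_P (complete_bipartite A B))"
  using assms
proof (induction "card A + card B" arbitrary: A B rule: less_induct)
  case less
  show ?case
  proof (intro conjI impI)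
    show "grim_N (complete_bipartite A B)" if "odd (card A + card B)"
      using grim_N_complete_bipartite_odd_step[OF less.prems that] less.hyps by blast
    show "grim_P (complete_bipartite A B)" if "even (card A + card B)"
      using grim_P_complete_bipartite_even_step[OF less.prems that] less.hyps by blast
  qed
qed

theorem theorem3p2:
  shows "(\<forall>n::nat. n \<ge> 1 \<longrightarrow> grim_N_position (K_bip 1 n)) \<and>
         (\<forall>m n::nat. 1 < m \<and> 1 < n \<longrightarrow> (grim_N_position (K_bip m n) \<longleftrightarrow> odd (m + n)))"
proof (intro conjI allI impI)
  fix n :: nat assume "1 \<le> n"
  then have "{..<n} \<noteq> {}" by (simp add: lessThan_empty_iff)
  then show "grim_N_position (K_bip 1 n)"
    by (simp add: grim_N_position_def K_bip_eq_complete_bipartite lessThan_Suc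
        del_isolated_complete_bipartite grim_N_star_left)
next
  fix m n :: nat assume "1 < m \<and> 1 < n"
  then have "1 < m" "1 < n" by simp_all
  then have position: "grim_N_position (K_bip m n) \<longleftrightarrow> grim_N (complete_bipartite {..<m} {..<n})"
    by (simp add: grim_N_position_def K_bip_eq_complete_bipartite del_isolated_complete_bipartite
        lessThan_empty_iff)
  have "(odd (m + n) \<longrightarrow> grim_N (complete_bipartite {..<m} {..<n})) \<and>
        (even (m + n) \<longrightarrow> grim_P (complete_bipartite {..<m} {..<n}))"
    using grim_complete_bipartite_parity[of "{..<m}" "{..<n}"] \<open>1 < m\<close> \<open>1 < n\<close> by simp
  then show "grim_N_position (K_bip m n) \<longleftrightarrow> odd (m + n)"
    using position grim_N_P_disjoint(2) by blast
qed

end
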